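(* Let $\xi_m>0$, $0\le\mu\le\xi_m$, and for $\Delta\ge0$, $T>0$ define $$f(\mu,\Delta,T)=2T\ln\frac{\cosh(\sqrt{\xi_m^2+\Delta^2}/2T)}{\cosh(\sqrt{\mu^2+\Delta^2}/2T)}+\mu\int_0^{\mu}\tanh\Big(\frac{\sqrt{\xi^2+\Delta^2}}{2T}\Big)\frac{d\xi}{\sqrt{\xi^2+\Delta^2}}$$ (with the integrand at $\Delta=0$ read as $\tanh(\xi/2T)/\xi$). Then for $\Delta>0$, $T>0$ and $\mu\in(0,\xi_m)$: $\partial f/\partial\mu>0$, $\partial f/\partial\Delta<0$, $\partial f/\partial T<0$. Moreover $\lim_{T\to\infty}f(\mu,\Delta,T)=0$ and $\lim_{\Delta\to\infty}f(\mu,\Delta,T)=0$ for fixed $T>0$. *)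

theory Defs
  imports "HOL-Analysis.Analysis"
begin

text \<open>The function f(mu, Delta, T) for cutoff xi_m. The integrand at Delta = 0
 is tanh(xi/2T)/xi; the value at the single point xi = 0 is irrelevant to the integral.\<close>
definition fgap :: "real \<Rightarrow> real \<Rightarrow> real \<Rightarrow> real \<Rightarrow> real" where
  "fgap \<xi>m \<mu> \<Delta> T =
     2 * T * ln (cosh (sqrt (\<xi>m\<^sup>2 + \<Delta>\<^sup>2) / (2 * T)) / cosh (sqrt (\<mu>\<^sup>2 + \<Delta>\<^sup>2) / (2 * T)))
     + \<mu> * integral {0..\<mu>} (\<lambda>\<xi>. tanh (sqrt (\<xi>\<^sup>2 + \<Delta>\<^sup>2) / (2 * T)) / sqrt (\<xi>\<^sup>2 + \<Delta>\<^sup>2))"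

end

theory Submission
  imports Defs
begin

text \<open>
  Write \<open>E(\<xi>) = sqrt (\<xi>\<^sup>2 + \<Delta>\<^sup>2)\<close> and \<open>K(\<xi>) = tanh (E(\<xi>) / 2T) / E(\<xi>)\<close>, so that
  \<open>f = 2T (ln cosh (E(\<xi>m) / 2T) - ln cosh (E(\<mu>) / 2T)) + \<mu> \<integral>\<^sub>0\<^sup>\<mu> K\<close>.
  In the \<open>\<mu>\<close>-derivative the boundary term \<open>\<mu> K(\<mu>)\<close> cancels the derivative of the logarithm,
  leaving \<open>\<integral>\<^sub>0\<^sup>\<mu> K > 0\<close>. The \<open>\<Delta>\<close>- and \<open>T\<close>-derivatives are obtained by differentiating
  under the integral sign, and every sign reduces to the one-variable inequality
  \<open>y (1 - tanh\<^sup>2 y) < tanh y\<close> for \<open>y > 0\<close>: it makes \<open>tanh y / y\<close> and \<open>ln cosh y - y tanh y\<close>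
  strictly decreasing. For the limits, \<open>ln cosh\<close> is 1-Lipschitz and at most \<open>y\<^sup>2\<close> on \<open>y \<ge> 0\<close>,
  while \<open>K \<le> min (1 / 2T) (1 / \<Delta>)\<close>; this bounds \<open>|f|\<close> by \<open>O(1/T)\<close> and by \<open>O(1/\<Delta>)\<close>.
\<close>

lemma x_less_sinh_mult_cosh:
  fixes x :: real
  assumes "0 < x"
  shows "x < sinh x * cosh x"
proof -
  have "(\<lambda>t. sinh t * cosh t - t) 0 < (\<lambda>t. sinh t * cosh t - t) x"
  proof (rule DERIV_pos_imp_increasing_open[OF assms])
    fix t :: real
    assume "0 < t" "t < x"
    have "((\<lambda>t. sinh t * cosh t - t) has_real_derivative 2 * sinh t ^ 2) (at t)"
      by (rule derivative_eq_intros refl)+ (use cosh_square_eq[of t] in \<open>simp add: power2_eq_square\<close>)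
    then show "\<exists>y. ((\<lambda>t. sinh t * cosh t - t) has_real_derivative y) (at t) \<and> y > 0"
      using \<open>0 < t\<close> by fastforce
  qed (intro continuous_intros)
  then show ?thesis by simp
qed

lemma one_minus_tanh_sq_eq: "1 - tanh (x::real) ^ 2 = 1 / cosh x ^ 2"
proof -
  have "1 - tanh x ^ 2 = (cosh x ^ 2 - sinh x ^ 2) / cosh x ^ 2"
    by (simp add: tanh_def power_divide field_simps)
  then show ?thesis using cosh_square_eq[of x] by simp
qed

lemma one_minus_tanh_sq_pos: "0 < 1 - tanh (x::real) ^ 2"
  by (simp add: one_minus_tanh_sq_eq)

lemma mult_one_minus_tanh_sq_less_tanh:
  fixes x :: real
  assumes "0 < x"
  shows "x * (1 - tanh x ^ 2) < tanh x"
proof -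
  have "x / cosh x ^ 2 < sinh x / cosh x"
    using x_less_sinh_mult_cosh[OF assms] by (simp add: field_simps power2_eq_square)
  then show ?thesis unfolding one_minus_tanh_sq_eq by (simp add: tanh_def)
qed

lemma tanh_div_strict_antimono:
  fixes x y :: real
  assumes "0 < x" "x < y"
  shows "tanh y / y < tanh x / x"
proof (rule DERIV_neg_imp_decreasing_open[OF assms(2)])
  fix t assume "x < t" "t < y"
  with assms have "0 < t" by simp
  have "((\<lambda>t. tanh t / t) has_real_derivative (t * (1 - tanh t ^ 2) - tanh t) / t\<^sup>2) (at t)"
    using \<open>0 < t\<close> by (auto intro!: derivative_eq_intros simp: power2_eq_square)
  moreover have "(t * (1 - tanh t ^ 2) - tanh t) / t\<^sup>2 < 0"
    using mult_one_minus_tanh_sq_less_tanh[OF \<open>0 < t\<close>] \<open>0 < t\<close> by (simp add: divide_neg_pos)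
  ultimately show "\<exists>D. ((\<lambda>t. tanh t / t) has_real_derivative D) (at t) \<and> D < 0" by blast
qed (use assms in \<open>intro continuous_intros; auto\<close>)

lemma ln_cosh_minus_mult_tanh_strict_antimono:
  fixes x y :: real
  assumes "0 \<le> x" "x < y"
  shows "ln (cosh y) - y * tanh y < ln (cosh x) - x * tanh x"
proof (rule DERIV_neg_imp_decreasing_open[OF assms(2)])
  fix t assume "x < t" "t < y"
  with assms have "0 < t" by simp
  have "((\<lambda>t. ln (cosh t) - t * tanh t) has_real_derivative - t * (1 - tanh t ^ 2)) (at t)"
    by (rule derivative_eq_intros refl | simp)+ (simp add: tanh_def field_simps)
  moreover have "- t * (1 - tanh t ^ 2) < 0"
    using \<open>0 < t\<close> one_minus_tanh_sq_pos[of t] by simp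
  ultimately show "\<exists>D. ((\<lambda>t. ln (cosh t) - t * tanh t) has_real_derivative D) (at t) \<and> D < 0"
    by blast
qed (intro continuous_intros; auto)

lemma tanh_le_self:
  fixes x :: real
  assumes "0 \<le> x"
  shows "tanh x \<le> x"
proof -
  have "(\<lambda>t. t - tanh t) 0 \<le> (\<lambda>t. t - tanh t) x"
  proof (rule DERIV_nonneg_imp_increasing_open[OF assms])
    fix t :: real
    have "((\<lambda>t. t - tanh t) has_real_derivative tanh t ^ 2) (at t)"
      by (auto intro!: derivative_eq_intros)
    then show "\<exists>y. ((\<lambda>t. t - tanh t) has_real_derivative y) (at t) \<and> y \<ge> 0" by fastforce
  qed (intro continuous_intros; auto)
  then show ?thesis by simp
qed

lemma ln_cosh_le_sq:
  fixes x :: real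
  assumes "0 \<le> x"
  shows "ln (cosh x) \<le> x\<^sup>2"
proof -
  have "ln (cosh x) \<le> x * tanh x"
    using ln_cosh_minus_mult_tanh_strict_antimono[of 0 x] assms by (cases "x = 0") auto
  also have "\<dots> \<le> x * x"
    using assms by (intro mult_left_mono tanh_le_self)
  finally show ?thesis by (simp add: power2_eq_square)
qed

lemma ln_cosh_mono:
  fixes x y :: real
  assumes "0 \<le> y" "y \<le> x"
  shows "ln (cosh y) \<le> ln (cosh x)"
proof (rule DERIV_nonneg_imp_increasing_open[OF assms(2)])
  fix t assume "y < t" "t < x"
  with assms have "0 < t" by simp
  have "((\<lambda>t. ln (cosh t)) has_real_derivative tanh t) (at t)"
    by (auto intro!: derivative_eq_intros simp: tanh_def)
  then show "\<exists>D. ((\<lambda>t. ln (cosh t)) has_real_derivative D) (at t) \<and> D \<ge> 0"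
    using \<open>0 < t\<close> by fastforce
qed (intro continuous_intros; auto)

lemma ln_cosh_diff_le:
  fixes x y :: real
  assumes "y \<le> x"
  shows "ln (cosh x) - ln (cosh y) \<le> x - y"
proof -
  have "(\<lambda>t. t - ln (cosh t)) y \<le> (\<lambda>t. t - ln (cosh t)) x"
  proof (rule DERIV_nonneg_imp_increasing_open[OF assms])
    fix t :: real
    have "((\<lambda>t. t - ln (cosh t)) has_real_derivative 1 - tanh t) (at t)"
      by (auto intro!: derivative_eq_intros simp: tanh_def)
    then show "\<exists>D. ((\<lambda>t. t - ln (cosh t)) has_real_derivative D) (at t) \<and> D \<ge> 0"
      using tanh_real_lt_1[of t] by fastforce
  qed (intro continuous_intros; auto)
  then show ?thesis by simp
qed

lemma sqrt_sum_sq_pos: "0 < y \<Longrightarrow> 0 < sqrt (x\<^sup>2 + y\<^sup>2 :: real)"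
  by (simp add: add_nonneg_pos)

lemma sqrt_add_sq_diff_le:
  fixes x y d :: real
  assumes "0 < d"
  shows "sqrt (x\<^sup>2 + d\<^sup>2) - sqrt (y\<^sup>2 + d\<^sup>2) \<le> x\<^sup>2 / d"
proof -
  define a b where "a = sqrt (x\<^sup>2 + d\<^sup>2)" and "b = sqrt (y\<^sup>2 + d\<^sup>2)"
  have "d \<le> a" "d \<le> b" by (simp_all add: a_def b_def)
  have "(a - b) * d \<le> x\<^sup>2"
  proof (cases "b \<le> a")
    case True
    then have "(a - b) * d \<le> (a - b) * (a + b)"
      using \<open>d \<le> a\<close> \<open>d \<le> b\<close> assms by (intro mult_left_mono) auto
    also have "\<dots> = x\<^sup>2 - y\<^sup>2"
      by (simp add: a_def b_def algebra_simps flip: power2_eq_square)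
    finally show ?thesis using zero_le_power2[of y] by linarith
  next
    case False
    then have "(a - b) * d \<le> 0" using assms by (intro mult_nonpos_nonneg) auto
    then show ?thesis using zero_le_power2[of x] by linarith
  qed
  then show ?thesis using assms by (simp add: a_def b_def field_simps)
qed

lemma integral_abs_le_bound:
  fixes h :: "real \<Rightarrow> real"
  assumes "a \<le> b" "0 \<le> c" "\<And>x. x \<in> {a..b} \<Longrightarrow> \<bar>h x\<bar> \<le> c"
  shows "\<bar>integral {a..b} h\<bar> \<le> c * (b - a)"
proof (cases "h integrable_on {a..b}")
  case True
  then have "(h has_integral integral {a..b} h) (cbox a b)"
    by (simp add: cbox_interval integrable_integral)
  from has_integral_bound[OF \<open>0 \<le> c\<close> this] show ?thesis
    using assms by (simp add: cbox_interval)
next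
  case False
  then show ?thesis using assms by (simp add: not_integrable_integral)
qed

lemma integral_neg_of_continuous:
  fixes h :: "real \<Rightarrow> real"
  assumes "a < b" "continuous_on {a..b} h" "\<And>x. x \<in> {a..b} \<Longrightarrow> h x < 0"
  shows "integral {a..b} h < 0"
  using integral_less_real[of a b h "\<lambda>_. 0"] assms by auto

lemma has_real_derivative_integral_parametric:
  fixes G G' :: "real \<Rightarrow> real \<Rightarrow> real"
  assumes "open U" "convex U" "p \<in> U"
    and "\<And>q x. q \<in> U \<Longrightarrow> ((\<lambda>q. G q x) has_real_derivative G' q x) (at q)"
    and "\<And>q. q \<in> U \<Longrightarrow> continuous_on {a..b} (G q)"
    and "continuous_on (U \<times> {a..b}) (\<lambda>(q, x). G' q x)"
  shows "((\<lambda>q. integral {a..b} (G q)) has_real_derivative integral {a..b} (G' p)) (at p)"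
proof -
  have "((\<lambda>q. integral (cbox a b) (G q)) has_field_derivative integral (cbox a b) (G' p)) (at p within U)"
    using assms
    by (intro leibniz_rule_field_derivative)
       (auto intro: has_field_derivative_at_within integrable_continuous_interval simp: cbox_interval)
  then show ?thesis using at_within_open[OF \<open>p \<in> U\<close> \<open>open U\<close>] by (simp add: cbox_interval)
qed

lemma tendsto_0_of_abs_le_div:
  fixes f :: "real \<Rightarrow> real"
  assumes "\<And>x. 1 \<le> x \<Longrightarrow> \<bar>f x\<bar> \<le> C / x"
  shows "(f \<longlongrightarrow> 0) at_top"
proof (rule Lim_null_comparison)
  show "\<forall>\<^sub>F x in at_top. norm (f x) \<le> C / x"
    using assms by (auto simp: eventually_at_top_linorder)
  show "((\<lambda>x. C / x) \<longlongrightarrow> 0) at_top"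
    by (rule real_tendsto_divide_at_top[OF tendsto_const filterlim_ident])
qed

definition gap_kernel :: "real \<Rightarrow> real \<Rightarrow> real \<Rightarrow> real" where
  "gap_kernel \<Delta> T \<xi> = tanh (sqrt (\<xi>\<^sup>2 + \<Delta>\<^sup>2) / (2 * T)) / sqrt (\<xi>\<^sup>2 + \<Delta>\<^sup>2)"

lemma fgap_eq_gap_kernel:
  "fgap \<xi>m \<mu> \<Delta> T =
     2 * T * (ln (cosh (sqrt (\<xi>m\<^sup>2 + \<Delta>\<^sup>2) / (2 * T))) - ln (cosh (sqrt (\<mu>\<^sup>2 + \<Delta>\<^sup>2) / (2 * T))))
     + \<mu> * integral {0..\<mu>} (gap_kernel \<Delta> T)"
  by (simp add: fgap_def gap_kernel_def[abs_def] ln_div)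

lemma continuous_on_gap_kernel: "0 < \<Delta> \<Longrightarrow> 0 < T \<Longrightarrow> continuous_on S (gap_kernel \<Delta> T)"
  unfolding gap_kernel_def[abs_def] using sqrt_sum_sq_pos
  by (intro continuous_intros) (auto simp: less_imp_neq[symmetric])

lemma gap_kernel_pos: "0 < \<Delta> \<Longrightarrow> 0 < T \<Longrightarrow> 0 < gap_kernel \<Delta> T \<xi>"
  using sqrt_sum_sq_pos[of \<Delta> \<xi>] by (simp add: gap_kernel_def)

lemma gap_kernel_nonneg: "0 \<le> T \<Longrightarrow> 0 \<le> gap_kernel \<Delta> T \<xi>"
  by (simp add: gap_kernel_def)

lemma gap_kernel_strict_antimono:
  assumes "0 < \<Delta>" "0 < T" "0 \<le> \<xi>" "\<xi> < \<eta>"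
  shows "gap_kernel \<Delta> T \<eta> < gap_kernel \<Delta> T \<xi>"
proof -
  define x y where "x = sqrt (\<xi>\<^sup>2 + \<Delta>\<^sup>2) / (2 * T)" and "y = sqrt (\<eta>\<^sup>2 + \<Delta>\<^sup>2) / (2 * T)"
  have "0 < x" "x < y"
    using assms sqrt_sum_sq_pos[of \<Delta> \<xi>] by (auto simp: x_def y_def divide_strict_right_mono power_strict_mono)
  then have "tanh y / y / (2 * T) < tanh x / x / (2 * T)"
    using assms(2) by (intro divide_strict_right_mono tanh_div_strict_antimono) auto
  then show ?thesis using assms(2) by (simp add: gap_kernel_def x_def y_def)
qed

lemma gap_kernel_has_derivative_Delta:
  fixes \<Delta> T \<xi> :: real
  defines "E \<equiv> sqrt (\<xi>\<^sup>2 + \<Delta>\<^sup>2)"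
  assumes \<Delta>: "0 < \<Delta>" and T: "0 < T"
  shows "((\<lambda>d. gap_kernel d T \<xi>) has_real_derivative
           (E / (2 * T) * (1 - tanh (E / (2 * T)) ^ 2) - tanh (E / (2 * T))) * \<Delta> / E ^ 3) (at \<Delta>)"
proof -
  have "0 < E" unfolding E_def using \<Delta> by (rule sqrt_sum_sq_pos)
  moreover have "\<xi>\<^sup>2 + \<Delta>\<^sup>2 = E\<^sup>2" unfolding E_def by simp
  ultimately show ?thesis
    unfolding gap_kernel_def using \<Delta> T
    by (auto intro!: derivative_eq_intros)
       (simp add: field_simps power3_eq_cube)
qed

lemma gap_kernel_has_derivative_T:
  fixes \<Delta> T \<xi> :: real
  defines "E \<equiv> sqrt (\<xi>\<^sup>2 + \<Delta>\<^sup>2)"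
  assumes \<Delta>: "0 < \<Delta>" and T: "0 < T"
  shows "((\<lambda>t. gap_kernel \<Delta> t \<xi>) has_real_derivative - (1 - tanh (E / (2 * T)) ^ 2) / (2 * T\<^sup>2)) (at T)"
proof -
  have "0 < E" unfolding E_def using \<Delta> by (rule sqrt_sum_sq_pos)
  then show ?thesis
    unfolding gap_kernel_def E_def[symmetric] using T
    by (auto intro!: derivative_eq_intros) (simp add: field_simps power2_eq_square)
qed

lemma fgap_has_derivative_mu:
  assumes "0 < \<mu>" "0 < \<Delta>" "0 < T"
  shows "((\<lambda>m. fgap \<xi>m m \<Delta> T) has_real_derivative integral {0..\<mu>} (gap_kernel \<Delta> T)) (at \<mu>)"
proof -
  have "((\<lambda>m. integral {0..m} (gap_kernel \<Delta> T)) has_real_derivative gap_kernel \<Delta> T \<mu>)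
          (at \<mu> within {0..\<mu> + 1})"
    using assms by (intro integral_has_real_derivative continuous_on_gap_kernel) auto
  then have FTC: "((\<lambda>m. integral {0..m} (gap_kernel \<Delta> T)) has_real_derivative gap_kernel \<Delta> T \<mu>) (at \<mu>)"
    using at_within_Icc_at[of 0 \<mu> "\<mu> + 1"] assms(1) by simp
  \<comment> \<open>the boundary term of the integral cancels the derivative of the logarithm\<close>
  show ?thesis
    unfolding fgap_eq_gap_kernel using assms sqrt_sum_sq_pos[of \<Delta> \<mu>]
    by (auto intro!: derivative_eq_intros FTC) (auto simp: gap_kernel_def tanh_def field_simps)
qed

lemma fgap_has_pos_derivative_mu:
  assumes "0 < \<mu>" "0 < \<Delta>" "0 < T"
  shows "\<exists>D>0. ((\<lambda>m. fgap \<xi>m m \<Delta> T) has_real_derivative D) (at \<mu>)"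
proof -
  have "integral {0..\<mu>} (\<lambda>_. 0) < integral {0..\<mu>} (gap_kernel \<Delta> T)"
    using assms by (intro integral_less_real continuous_on_gap_kernel gap_kernel_pos) auto
  then show ?thesis using fgap_has_derivative_mu[OF assms] by auto
qed

lemma integral_gap_kernel_has_neg_derivative_Delta:
  assumes "0 < \<mu>" "0 < \<Delta>" "0 < T"
  shows "\<exists>D<0. ((\<lambda>d. integral {0..\<mu>} (gap_kernel d T)) has_real_derivative D) (at \<Delta>)"
proof -
  define E where "E d \<xi> = sqrt (\<xi>\<^sup>2 + d\<^sup>2)" for d \<xi> :: real
  define G' where "G' d \<xi> = (E d \<xi> / (2 * T) * (1 - tanh (E d \<xi> / (2 * T)) ^ 2) - tanh (E d \<xi> / (2 * T)))
                              * d / E d \<xi> ^ 3" for d \<xi>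
  let ?U = "{\<Delta> / 2<..}"
  have "((\<lambda>d. integral {0..\<mu>} (gap_kernel d T)) has_real_derivative integral {0..\<mu>} (G' \<Delta>)) (at \<Delta>)"
  proof (rule has_real_derivative_integral_parametric[where U = ?U])
    fix q x assume "q \<in> ?U"
    then show "((\<lambda>q. gap_kernel q T x) has_real_derivative G' q x) (at q)"
      using assms gap_kernel_has_derivative_Delta[of q T x] by (simp add: G'_def E_def)
  next
    show "continuous_on (?U \<times> {0..\<mu>}) (\<lambda>(q, x). G' q x)"
      unfolding G'_def E_def split_beta using assms sqrt_sum_sq_pos
      by (intro continuous_intros) (auto simp: less_imp_neq[symmetric])
  qed (use assms in \<open>auto intro: continuous_on_gap_kernel\<close>)
  moreover have "integral {0..\<mu>} (G' \<Delta>) < 0"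
  proof (rule integral_neg_of_continuous[OF \<open>0 < \<mu>\<close>])
    show "continuous_on {0..\<mu>} (G' \<Delta>)"
      unfolding G'_def E_def using assms sqrt_sum_sq_pos
      by (intro continuous_intros) (auto simp: less_imp_neq[symmetric])
    fix x
    have "0 < E \<Delta> x" "0 < E \<Delta> x / (2 * T)"
      using assms sqrt_sum_sq_pos[of \<Delta> x] by (auto simp: E_def)
    with mult_one_minus_tanh_sq_less_tanh[OF this(2)] show "G' \<Delta> x < 0"
      using assms by (simp add: G'_def mult_neg_pos divide_neg_pos)
  qed
  ultimately show ?thesis by blast
qed

lemma fgap_has_neg_derivative_Delta:
  assumes "0 < \<mu>" "\<mu> < \<xi>m" "0 < \<Delta>" "0 < T"
  shows "\<exists>D<0. ((\<lambda>d. fgap \<xi>m \<mu> d T) has_real_derivative D) (at \<Delta>)"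
proof -
  obtain D where "D < 0" and D: "((\<lambda>d. integral {0..\<mu>} (gap_kernel d T)) has_real_derivative D) (at \<Delta>)"
    using integral_gap_kernel_has_neg_derivative_Delta assms by blast
  have log: "((\<lambda>d. 2 * T * (ln (cosh (sqrt (\<xi>m\<^sup>2 + d\<^sup>2) / (2 * T))) - ln (cosh (sqrt (\<mu>\<^sup>2 + d\<^sup>2) / (2 * T)))))
      has_real_derivative \<Delta> * (gap_kernel \<Delta> T \<xi>m - gap_kernel \<Delta> T \<mu>)) (at \<Delta>)"
    using assms sqrt_sum_sq_pos[of \<Delta> \<xi>m] sqrt_sum_sq_pos[of \<Delta> \<mu>]
    by (auto intro!: derivative_eq_intros) (simp add: gap_kernel_def tanh_def field_simps)
  have "((\<lambda>d. fgap \<xi>m \<mu> d T) has_real_derivative \<Delta> * (gap_kernel \<Delta> T \<xi>m - gap_kernel \<Delta> T \<mu>) + \<mu> * D) (at \<Delta>)"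
    unfolding fgap_eq_gap_kernel by (intro DERIV_add log DERIV_cmult D)
  moreover have "gap_kernel \<Delta> T \<xi>m < gap_kernel \<Delta> T \<mu>"
    using assms by (intro gap_kernel_strict_antimono) auto
  then have "\<Delta> * (gap_kernel \<Delta> T \<xi>m - gap_kernel \<Delta> T \<mu>) + \<mu> * D < 0"
    using assms \<open>D < 0\<close> by (simp add: add_neg_neg mult_pos_neg)
  ultimately show ?thesis by blast
qed

lemma integral_gap_kernel_has_neg_derivative_T:
  assumes "0 < \<mu>" "0 < \<Delta>" "0 < T"
  shows "\<exists>D<0. ((\<lambda>t. integral {0..\<mu>} (gap_kernel \<Delta> t)) has_real_derivative D) (at T)"
proof -
  define G' where "G' t \<xi> = - (1 - tanh (sqrt (\<xi>\<^sup>2 + \<Delta>\<^sup>2) / (2 * t)) ^ 2) / (2 * t\<^sup>2)" for t \<xi>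
  let ?U = "{T / 2<..}"
  have "((\<lambda>t. integral {0..\<mu>} (gap_kernel \<Delta> t)) has_real_derivative integral {0..\<mu>} (G' T)) (at T)"
  proof (rule has_real_derivative_integral_parametric[where U = ?U])
    fix q x assume "q \<in> ?U"
    then show "((\<lambda>q. gap_kernel \<Delta> q x) has_real_derivative G' q x) (at q)"
      using assms gap_kernel_has_derivative_T[of \<Delta> q x] by (simp add: G'_def)
  next
    show "continuous_on (?U \<times> {0..\<mu>}) (\<lambda>(q, x). G' q x)"
      unfolding G'_def split_beta using assms
      by (intro continuous_intros) auto
  qed (use assms in \<open>auto intro: continuous_on_gap_kernel\<close>)
  moreover have "integral {0..\<mu>} (G' T) < 0"
    using assms one_minus_tanh_sq_pos
    by (intro integral_neg_of_continuous) (auto simp: G'_def divide_neg_pos intro!: continuous_intros)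
  ultimately show ?thesis by blast
qed

lemma fgap_has_neg_derivative_T:
  assumes "0 < \<mu>" "\<mu> < \<xi>m" "0 < \<Delta>" "0 < T"
  shows "\<exists>D<0. ((\<lambda>t. fgap \<xi>m \<mu> \<Delta> t) has_real_derivative D) (at T)"
proof -
  define \<phi> where "\<phi> x = ln (cosh x) - x * tanh x" for x :: real
  define a b where "a = sqrt (\<xi>m\<^sup>2 + \<Delta>\<^sup>2)" and "b = sqrt (\<mu>\<^sup>2 + \<Delta>\<^sup>2)"
  obtain D where "D < 0" and D: "((\<lambda>t. integral {0..\<mu>} (gap_kernel \<Delta> t)) has_real_derivative D) (at T)"
    using integral_gap_kernel_has_neg_derivative_T assms by blast
  have log: "((\<lambda>t. 2 * t * (ln (cosh (a / (2 * t))) - ln (cosh (b / (2 * t)))))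
      has_real_derivative 2 * (\<phi> (a / (2 * T)) - \<phi> (b / (2 * T)))) (at T)"
    using assms by (auto intro!: derivative_eq_intros) (simp add: \<phi>_def tanh_def field_simps)
  have "((\<lambda>t. fgap \<xi>m \<mu> \<Delta> t) has_real_derivative 2 * (\<phi> (a / (2 * T)) - \<phi> (b / (2 * T))) + \<mu> * D) (at T)"
    unfolding fgap_eq_gap_kernel a_def[symmetric] b_def[symmetric] by (intro DERIV_add log DERIV_cmult D)
  moreover have "0 < b" "b < a"
    using assms sqrt_sum_sq_pos[of \<Delta> \<mu>] by (auto simp: a_def b_def power_strict_mono)
  then have "\<phi> (a / (2 * T)) < \<phi> (b / (2 * T))"
    unfolding \<phi>_def using assms
    by (intro ln_cosh_minus_mult_tanh_strict_antimono) (auto simp: divide_strict_right_mono)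
  then have "2 * (\<phi> (a / (2 * T)) - \<phi> (b / (2 * T))) + \<mu> * D < 0"
    using assms \<open>D < 0\<close> by (simp add: add_neg_neg mult_pos_neg)
  ultimately show ?thesis by blast
qed

lemma abs_fgap_le:
  assumes "0 \<le> \<mu>" "\<mu> \<le> \<xi>m" "0 < T"
    and log_le: "2 * T * (ln (cosh (sqrt (\<xi>m\<^sup>2 + \<Delta>\<^sup>2) / (2 * T))) - ln (cosh (sqrt (\<mu>\<^sup>2 + \<Delta>\<^sup>2) / (2 * T)))) \<le> B"
    and kernel_le: "\<And>\<xi>. \<xi> \<in> {0..\<mu>} \<Longrightarrow> gap_kernel \<Delta> T \<xi> \<le> c"
  shows "\<bar>fgap \<xi>m \<mu> \<Delta> T\<bar> \<le> B + c * \<mu>\<^sup>2"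
proof -
  define L where "L = 2 * T * (ln (cosh (sqrt (\<xi>m\<^sup>2 + \<Delta>\<^sup>2) / (2 * T))) - ln (cosh (sqrt (\<mu>\<^sup>2 + \<Delta>\<^sup>2) / (2 * T))))"
  define I where "I = integral {0..\<mu>} (gap_kernel \<Delta> T)"
  have "ln (cosh (sqrt (\<mu>\<^sup>2 + \<Delta>\<^sup>2) / (2 * T))) \<le> ln (cosh (sqrt (\<xi>m\<^sup>2 + \<Delta>\<^sup>2) / (2 * T)))"
    using assms by (intro ln_cosh_mono divide_right_mono) (auto simp: power_mono)
  then have "0 \<le> L"
    unfolding L_def using \<open>0 < T\<close> by simp
  have "0 \<le> c" using kernel_le[of 0] gap_kernel_nonneg[of T \<Delta> 0] assms by force
  then have "\<bar>I\<bar> \<le> c * \<mu>"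
    unfolding I_def using integral_abs_le_bound[of 0 \<mu> c "gap_kernel \<Delta> T"] assms gap_kernel_nonneg[of T \<Delta>]
    by force
  then have "\<bar>\<mu> * I\<bar> \<le> c * \<mu>\<^sup>2"
    using assms by (simp add: abs_mult power2_eq_square mult_left_mono mult.assoc mult.left_commute)
  moreover have "fgap \<xi>m \<mu> \<Delta> T = L + \<mu> * I"
    unfolding L_def I_def fgap_eq_gap_kernel ..
  ultimately show ?thesis using \<open>0 \<le> L\<close> log_le unfolding L_def by linarith
qed

lemma fgap_tendsto_0_T:
  assumes "0 \<le> \<mu>" "\<mu> \<le> \<xi>m"
  shows "((\<lambda>t. fgap \<xi>m \<mu> \<Delta> t) \<longlongrightarrow> 0) at_top"
proof (rule tendsto_0_of_abs_le_div[where C = "(\<xi>m\<^sup>2 + \<Delta>\<^sup>2 + \<mu>\<^sup>2) / 2"])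
  fix t :: real
  assume "1 \<le> t"
  then have "0 < t" by simp
  define a where "a = sqrt (\<xi>m\<^sup>2 + \<Delta>\<^sup>2)"
  have "\<bar>fgap \<xi>m \<mu> \<Delta> t\<bar> \<le> a\<^sup>2 / (2 * t) + 1 / (2 * t) * \<mu>\<^sup>2"
  proof (rule abs_fgap_le[OF assms \<open>0 < t\<close>])
    have "0 \<le> ln (cosh (sqrt (\<mu>\<^sup>2 + \<Delta>\<^sup>2) / (2 * t)))"
      by (rule ln_ge_zero[OF cosh_real_ge_1])
    moreover have "ln (cosh (a / (2 * t))) \<le> (a / (2 * t))\<^sup>2"
      using \<open>0 < t\<close> by (intro ln_cosh_le_sq) (simp add: a_def)
    ultimately have "2 * t * (ln (cosh (a / (2 * t))) - ln (cosh (sqrt (\<mu>\<^sup>2 + \<Delta>\<^sup>2) / (2 * t))))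
               \<le> 2 * t * (a / (2 * t))\<^sup>2"
      using \<open>0 < t\<close> by (intro mult_left_mono; linarith)
    also have "\<dots> = a\<^sup>2 / (2 * t)"
      using \<open>0 < t\<close> by (simp add: power2_eq_square)
    finally show "2 * t * (ln (cosh (sqrt (\<xi>m\<^sup>2 + \<Delta>\<^sup>2) / (2 * t))) - ln (cosh (sqrt (\<mu>\<^sup>2 + \<Delta>\<^sup>2) / (2 * t))))
               \<le> a\<^sup>2 / (2 * t)"
      by (simp add: a_def)
  next
    fix \<xi> :: real
    define E where "E = sqrt (\<xi>\<^sup>2 + \<Delta>\<^sup>2)"
    have "0 \<le> E" by (simp add: E_def)
    moreover from this have "tanh (E / (2 * t)) \<le> E / (2 * t)"
      using \<open>0 < t\<close> by (intro tanh_le_self) simp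
    ultimately have "tanh (E / (2 * t)) / E \<le> 1 / (2 * t)"
      using \<open>0 < t\<close> by (cases "E = 0") (auto simp: field_simps)
    then show "gap_kernel \<Delta> t \<xi> \<le> 1 / (2 * t)"
      by (simp add: gap_kernel_def E_def)
  qed
  also have "\<dots> = (\<xi>m\<^sup>2 + \<Delta>\<^sup>2 + \<mu>\<^sup>2) / 2 / t"
    using \<open>0 < t\<close> by (simp add: a_def field_simps)
  finally show "\<bar>fgap \<xi>m \<mu> \<Delta> t\<bar> \<le> (\<xi>m\<^sup>2 + \<Delta>\<^sup>2 + \<mu>\<^sup>2) / 2 / t" .
qed

lemma fgap_tendsto_0_Delta:
  assumes "0 \<le> \<mu>" "\<mu> \<le> \<xi>m" "0 < T"
  shows "((\<lambda>d. fgap \<xi>m \<mu> d T) \<longlongrightarrow> 0) at_top"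
proof (rule tendsto_0_of_abs_le_div[where C = "\<xi>m\<^sup>2 + \<mu>\<^sup>2"])
  fix d :: real
  assume "1 \<le> d"
  then have "0 < d" by simp
  have "\<bar>fgap \<xi>m \<mu> d T\<bar> \<le> \<xi>m\<^sup>2 / d + 1 / d * \<mu>\<^sup>2"
  proof (rule abs_fgap_le[OF assms])
    have "2 * T * (ln (cosh (sqrt (\<xi>m\<^sup>2 + d\<^sup>2) / (2 * T))) - ln (cosh (sqrt (\<mu>\<^sup>2 + d\<^sup>2) / (2 * T))))
          \<le> 2 * T * (sqrt (\<xi>m\<^sup>2 + d\<^sup>2) / (2 * T) - sqrt (\<mu>\<^sup>2 + d\<^sup>2) / (2 * T))"
      using assms by (intro mult_left_mono ln_cosh_diff_le divide_right_mono) (auto simp: power_mono)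
    also have "\<dots> = sqrt (\<xi>m\<^sup>2 + d\<^sup>2) - sqrt (\<mu>\<^sup>2 + d\<^sup>2)"
      using assms by (simp add: field_simps)
    also have "\<dots> \<le> \<xi>m\<^sup>2 / d"
      using \<open>0 < d\<close> by (rule sqrt_add_sq_diff_le)
    finally show "2 * T * (ln (cosh (sqrt (\<xi>m\<^sup>2 + d\<^sup>2) / (2 * T))) - ln (cosh (sqrt (\<mu>\<^sup>2 + d\<^sup>2) / (2 * T))))
                  \<le> \<xi>m\<^sup>2 / d" .
  next
    fix \<xi> :: real
    define E where "E = sqrt (\<xi>\<^sup>2 + d\<^sup>2)"
    have "d \<le> E" by (simp add: E_def)
    then have "tanh (E / (2 * T)) / E \<le> 1 / E"
      using tanh_real_lt_1[of "E / (2 * T)"] \<open>0 < d\<close> by (intro divide_right_mono) auto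
    also have "\<dots> \<le> 1 / d"
      using \<open>d \<le> E\<close> \<open>0 < d\<close> by (simp add: frac_le)
    finally show "gap_kernel d T \<xi> \<le> 1 / d"
      by (simp add: gap_kernel_def E_def)
  qed
  also have "\<dots> = (\<xi>m\<^sup>2 + \<mu>\<^sup>2) / d"
    by (simp add: add_divide_distrib)
  finally show "\<bar>fgap \<xi>m \<mu> d T\<bar> \<le> (\<xi>m\<^sup>2 + \<mu>\<^sup>2) / d" .
qed

theorem mainTheorem4:
  fixes \<xi>m :: real
  assumes "\<xi>m > 0"
  shows "(\<forall>\<mu> \<Delta> T. 0 < \<mu> \<and> \<mu> < \<xi>m \<and> \<Delta> > 0 \<and> T > 0 \<longrightarrow>
            (\<exists>D. ((\<lambda>m. fgap \<xi>m m \<Delta> T) has_real_derivative D) (at \<mu>) \<and> D > 0) \<and>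
            (\<exists>D. ((\<lambda>d. fgap \<xi>m \<mu> d T) has_real_derivative D) (at \<Delta>) \<and> D < 0) \<and>
            (\<exists>D. ((\<lambda>t. fgap \<xi>m \<mu> \<Delta> t) has_real_derivative D) (at T) \<and> D < 0))
       \<and> (\<forall>\<mu> \<Delta>. 0 \<le> \<mu> \<and> \<mu> \<le> \<xi>m \<and> \<Delta> \<ge> 0 \<longrightarrow>
            ((\<lambda>t. fgap \<xi>m \<mu> \<Delta> t) \<longlongrightarrow> 0) at_top)
       \<and> (\<forall>\<mu> T. 0 \<le> \<mu> \<and> \<mu> \<le> \<xi>m \<and> T > 0 \<longrightarrow>
            ((\<lambda>d. fgap \<xi>m \<mu> d T) \<longlongrightarrow> 0) at_top)"
proof (intro conjI allI impI; elim conjE)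
  fix \<mu> \<Delta> T :: real
  assume "0 < \<mu>" "\<mu> < \<xi>m" "0 < \<Delta>" "0 < T"
  then show "\<exists>D. ((\<lambda>m. fgap \<xi>m m \<Delta> T) has_real_derivative D) (at \<mu>) \<and> D > 0"
    and "\<exists>D. ((\<lambda>d. fgap \<xi>m \<mu> d T) has_real_derivative D) (at \<Delta>) \<and> D < 0"
    and "\<exists>D. ((\<lambda>t. fgap \<xi>m \<mu> \<Delta> t) has_real_derivative D) (at T) \<and> D < 0"
    using fgap_has_pos_derivative_mu fgap_has_neg_derivative_Delta fgap_has_neg_derivative_T
    by (meson conj_commute)+
qed (simp_all add: fgap_tendsto_0_T fgap_tendsto_0_Delta)

end
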